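(* Let $F$ be a field, $n\ge1$, and let $G=\mathrm{Sp}_{2n}(F)$, realized as the subgroup of $\mathrm{SL}_{2n}(F)$ of block matrices $\begin{pmatrix}a&b\\c&d\end{pmatrix}$ ($n\times n$ blocks) with $ad^T-bc^T=1_n$ and $ab^T$, $cd^T$ symmetric. Let $U=\left\{\begin{pmatrix}1&k\\0&1\end{pmatrix}: k\text{ symmetric}\right\}$, $U^T=\left\{\begin{pmatrix}1&0\\k&1\end{pmatrix}: k\text{ symmetric}\right\}$, $H=\left\{\begin{pmatrix}a^{-1}&0\\0&a^T\end{pmatrix}: a\in\mathrm{GL}_n(F)\right\}$. Then $G=U^TUU^TH$. *)

theory Defs
  imports "HOL-Analysis.Analysis"
begin

text \<open>A 2n x 2n matrix is indexed by the sum type 'n + 'n (first block Inl, second block Inr).\<close>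

definition block :: "'a^'n^'n \<Rightarrow> 'a^'n^'n \<Rightarrow> 'a^'n^'n \<Rightarrow> 'a^'n^'n \<Rightarrow> 'a^('n+'n)^('n+'n)" where
  "block a b c d = (\<chi> i j. case i of
      Inl i' \<Rightarrow> (case j of Inl j' \<Rightarrow> a $ i' $ j' | Inr j' \<Rightarrow> b $ i' $ j')
    | Inr i' \<Rightarrow> (case j of Inl j' \<Rightarrow> c $ i' $ j' | Inr j' \<Rightarrow> d $ i' $ j'))"

definition symmetric_mat :: "'a^'n^'n \<Rightarrow> bool" where
  "symmetric_mat k \<longleftrightarrow> transpose k = k"

definition Sp :: "(('a::field)^('n::finite+'n)^('n+'n)) set" where
  "Sp = {M. det M = 1 \<and> (\<exists>a b c d. M = block a b c d \<and>
           a ** transpose d - b ** transpose c = mat 1 \<and>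
           symmetric_mat (a ** transpose b) \<and> symmetric_mat (c ** transpose d))}"

definition U_upper :: "(('a::field)^('n::finite+'n)^('n+'n)) set" where
  "U_upper = {block (mat 1) k 0 (mat 1) | k. symmetric_mat k}"

definition U_lower :: "(('a::field)^('n::finite+'n)^('n+'n)) set" where
  "U_lower = {block (mat 1) 0 k (mat 1) | k. symmetric_mat k}"

definition H_diag :: "(('a::field)^('n::finite+'n)^('n+'n)) set" where
  "H_diag = {block (matrix_inv a) 0 0 (transpose a) | a. invertible a}"

definition set_mat_prod :: "(('a::field)^'m^'m) set \<Rightarrow> ('a^'m^'m) set \<Rightarrow> ('a^'m^'m) set" where
  "set_mat_prod A B = {x ** y | x y. x \<in> A \<and> y \<in> B}"

end

theory Submission
  imports Defs
begin

text \<open>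
  Write a symplectic matrix as \<open>M = block a b c d\<close>. From \<open>M\<inverse> = block d\<^sup>T (-b\<^sup>T) (-c\<^sup>T) a\<^sup>T\<close> one
  reads off that \<open>b\<^sup>T d\<close> is symmetric and that \<open>b\<close> and \<open>d\<close> have no common kernel vector.
  These two facts allow one to choose a symmetric \<open>x\<close> with \<open>d - x b\<close> invertible: if \<open>d w\<^sub>0 = 0\<close>
  for some \<open>w\<^sub>0 \<noteq> 0\<close>, pick \<open>i\<close> with \<open>(b w\<^sub>0)\<^sub>i \<noteq> 0\<close> and replace \<open>d\<close> by \<open>d - E\<^sub>i\<^sub>i b\<close>; since
  \<open>\<langle>b w\<^sub>0, d w\<rangle> = \<langle>d w\<^sub>0, b w\<rangle> = 0\<close> for all \<open>w\<close>, the kernel of \<open>d\<close> strictly shrinks.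
  Multiplying \<open>M\<close> from the left by the lower unipotent matrix with entry \<open>-x\<close> makes its lower
  right block \<open>d\<close> invertible, and such a symplectic matrix factors explicitly as
  \<open>block 1 (b d\<inverse>) 0 1 ** block 1 0 (c d\<^sup>T) 1 ** block d\<^sup>-\<^sup>T 0 0 d\<close>.
  Conversely all factors are symplectic, and so are their products, as \<open>Sp\<close> is the stabiliser of
  the standard symplectic form.
\<close>

lemma matrix_add_rdistrib: "((A::'a::semiring_1^'n^'m) + B) ** C = A ** C + B ** C"
  by (vector matrix_matrix_mult_def sum.distrib[symmetric] field_simps)

lemma matrix_diff_ldistrib: "(A::'a::ring_1^'n^'m) ** (B - C) = A ** B - A ** C"
  by (vector matrix_matrix_mult_def sum_subtractf[symmetric] field_simps)

lemma matrix_diff_rdistrib: "((A::'a::ring_1^'n^'m) - B) ** C = A ** C - B ** C"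
  by (vector matrix_matrix_mult_def sum_subtractf[symmetric] field_simps)

lemma matrix_neg_left: "(- (A::'a::ring_1^'n^'m)) ** B = - (A ** B)"
  by (vector matrix_matrix_mult_def sum_negf[symmetric])

lemma matrix_neg_right: "(A::'a::ring_1^'n^'m) ** (- B) = - (A ** B)"
  by (vector matrix_matrix_mult_def sum_negf[symmetric])

lemma transpose_add: "transpose (A + B) = transpose A + transpose B"
  by (simp add: vec_eq_iff transpose_def)

lemma transpose_diff: "transpose ((A::'a::ab_group_add^'n^'m) - B) = transpose A - transpose B"
  by (simp add: vec_eq_iff transpose_def)

lemma transpose_uminus: "transpose (- (A::'a::ab_group_add^'n^'m)) = - transpose A"
  by (simp add: vec_eq_iff transpose_def)

lemma transpose_zero [simp]: "transpose 0 = 0"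
  by (simp add: vec_eq_iff transpose_def)

lemma matrix_inv_right: "invertible A \<Longrightarrow> A ** matrix_inv A = mat 1"
  and matrix_inv_left: "invertible A \<Longrightarrow> matrix_inv A ** A = mat 1"
  by (metis (mono_tags, lifting) invertible_def matrix_inv_def someI_ex)+

lemma matrix_inv_unique:
  fixes A :: "'a::field^'n^'n"
  assumes "A ** B = mat 1"
  shows "matrix_inv A = B"
  by (metis assms invertible_right_inverse matrix_inv_left matrix_mul_assoc matrix_mul_lid
      matrix_mul_rid)

lemma invertible_transpose:
  fixes A :: "'a::field^'n^'n"
  shows "invertible A \<Longrightarrow> invertible (transpose A)"
  by (simp add: invertible_det_nz)

lemma block_nth [simp]:
  "block a b c d $ Inl i $ Inl j = a $ i $ j"
  "block a b c d $ Inl i $ Inr j = b $ i $ j"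
  "block a b c d $ Inr i $ Inl j = c $ i $ j"
  "block a b c d $ Inr i $ Inr j = d $ i $ j"
  by (simp_all add: block_def)

lemma block_eq_iff:
  "block a b c d = block a' b' c' d' \<longleftrightarrow> a = a' \<and> b = b' \<and> c = c' \<and> d = d'"
  by (metis block_nth vec_eq_iff)

lemma block_cases:
  fixes M :: "'a^('n::finite+'n)^('n+'n)"
  obtains a b c d where "M = block a b c d"
  using that[of "\<chi> i j. M $ Inl i $ Inl j" "\<chi> i j. M $ Inl i $ Inr j"
      "\<chi> i j. M $ Inr i $ Inl j" "\<chi> i j. M $ Inr i $ Inr j"]
  by (simp add: vec_eq_iff block_def split: sum.split)

lemma block_mult:
  fixes a b c d a' b' c' d' :: "'a::comm_ring_1^'n::finite^'n"
  shows "block a b c d ** block a' b' c' d' =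
    block (a ** a' + b ** c') (a ** b' + b ** d') (c ** a' + d ** c') (c ** b' + d ** d')"
proof -
  have "(block a b c d ** block a' b' c' d') $ i $ j =
    block (a ** a' + b ** c') (a ** b' + b ** d') (c ** a' + d ** c') (c ** b' + d ** d') $ i $ j"
    for i j
    by (cases i; cases j)
      (simp_all add: matrix_matrix_mult_def sum.Plus[of UNIV UNIV, simplified UNIV_Plus_UNIV])
  then show ?thesis by (simp add: vec_eq_iff)
qed

lemma mat_1_block: "(mat 1 :: 'a::zero_neq_one^('n::finite+'n)^('n+'n)) = block (mat 1) 0 0 (mat 1)"
  by (simp add: vec_eq_iff mat_def block_def split: sum.split)

lemma transpose_block:
  "transpose (block a b c d) = block (transpose a) (transpose c) (transpose b) (transpose d)"
  by (simp add: vec_eq_iff transpose_def block_def split: sum.split)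

section \<open>Determinants of block triangular matrices\<close>

lemma map_permutation_Inl_apply [simp]:
  "map_permutation UNIV Inl q (Inl i) = Inl (q i)"
  "map_permutation UNIV Inl q (Inr i) = Inr i"
  by (auto simp: map_permutation_apply map_permutation_def restrict_id_def)

lemma det_block_unit_lower_right:
  fixes A B :: "'a::comm_ring_1^'n::finite^'n"
  shows "det (block A B 0 (mat 1)) = det A"
proof -
  let ?M = "block A B 0 (mat 1)"
  let ?f = "\<lambda>p. of_int (sign p) * (\<Prod>i\<in>UNIV. ?M $ i $ p i)"
  let ?P = "{p. p permutes (UNIV :: ('n+'n) set)}"
  let ?Q = "{q. q permutes (UNIV :: 'n set)}"
  let ?lift = "map_permutation UNIV Inl :: ('n \<Rightarrow> 'n) \<Rightarrow> _"
  have "det ?M = sum ?f ?P" by (simp add: det_def)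
  also have "\<dots> = sum ?f (?lift ` ?Q)"
  proof (rule sum.mono_neutral_right)
    show "?lift ` ?Q \<subseteq> ?P"
      by (auto intro!: permutes_subset[OF map_permutation_permutes[of Inl UNIV "range Inl"]] simp: bij_betw_def)
    show "\<forall>p\<in>?P - ?lift ` ?Q. ?f p = 0"
    proof
      fix p assume p_in: "p \<in> ?P - ?lift ` ?Q"
      then have p: "p permutes UNIV" by simp
      show "?f p = 0"
      proof (cases "\<forall>j. p (Inr j) = Inr j")
        case False
        then obtain j where "p (Inr j) \<noteq> Inr j" by blast
        then have "?M $ Inr j $ p (Inr j) = 0"
          by (cases "p (Inr j)") (auto simp: mat_def)
        then have "(\<Prod>i\<in>UNIV. ?M $ i $ p i) = 0" by (intro prod_zero) auto
        then show ?thesis by simp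
      next
        case fixes_Inr: True
        have "\<exists>k. p (Inl i) = Inl k" for i
          using permutes_inj[OF p] fixes_Inr
          by (cases "p (Inl i)") (auto, metis injD sum.distinct(1))
        then obtain q where pq: "\<And>i. p (Inl i) = Inl (q i)" by metis
        have "inj q" by (metis injI pq permutes_inj[OF p] injD sum.inject(1))
        then have "bij q" by (simp add: bij_def finite_UNIV_inj_surj)
        then have "q permutes UNIV" by (rule bij_imp_permutes) simp
        moreover have "?lift q = p"
          by (rule ext) (metis fixes_Inr map_permutation_Inl_apply pq sum.exhaust)
        ultimately show ?thesis using p_in by auto
      qed
    qed
  qed simp
  also have "\<dots> = sum (?f \<circ> ?lift) ?Q"
    by (rule sum.reindex, rule inj_onI) (metis map_permutation_Inl_apply(1) sum.inject(1) ext)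
  also have "\<dots> = sum (\<lambda>q. of_int (sign q) * (\<Prod>i\<in>UNIV. A $ i $ q i)) ?Q"
  proof (rule sum.cong)
    fix q assume "q \<in> ?Q"
    then have sign_lift: "sign (?lift q) = sign q"
      by (intro sign_map_permutation) auto
    show "(?f \<circ> ?lift) q = of_int (sign q) * (\<Prod>i\<in>UNIV. A $ i $ q i)"
      by (simp add: sign_lift prod.Plus[of UNIV UNIV, simplified UNIV_Plus_UNIV] mat_def)
  qed simp
  also have "\<dots> = det A" by (simp add: det_def)
  finally show ?thesis .
qed

lemma det_block_unit_upper_left:
  fixes D :: "'a::comm_ring_1^'n::finite^'n"
  shows "det (block (mat 1) 0 0 D) = det D"
proof -
  define s :: "'n+'n \<Rightarrow> 'n+'n" where "s = case_sum Inr Inl"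
  have ss: "s (s x) = x" for x by (cases x) (auto simp: s_def)
  then have s: "s permutes UNIV"
    by (intro bij_imp_permutes bij_betw_byWitness[where f' = s]) auto
  let ?N = "block (mat 1) 0 0 D :: 'a^('n+'n)^('n+'n)"
  have swapped: "(\<chi> i j. ?N $ s i $ s j) = block D 0 0 (mat 1)"
    by (simp add: vec_eq_iff block_def s_def split: sum.split)
  have "det (\<chi> i j. ?N $ s i $ s j) = of_int (sign s) * (of_int (sign s) * det ?N)"
    using det_permute_columns[OF s, of "\<chi> i. ?N $ s i"] det_permute_rows[OF s, of ?N] by simp
  also have "\<dots> = det ?N"
    by (metis mult.assoc mult_1 of_int_1 of_int_mult sign_idempotent)
  finally show ?thesis
    by (simp add: swapped det_block_unit_lower_right)
qed

lemma det_block_upper_triangular: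
  fixes A B D :: "'a::comm_ring_1^'n::finite^'n"
  shows "det (block A B 0 D) = det A * det D"
proof -
  have "block A B 0 D = block (mat 1) 0 0 D ** block A B 0 (mat 1)"
    by (simp add: block_mult)
  then show ?thesis
    by (simp add: det_mul det_block_unit_lower_right det_block_unit_upper_left)
qed

lemma det_block_lower_triangular:
  fixes A C D :: "'a::comm_ring_1^'n::finite^'n"
  shows "det (block A 0 C D) = det A * det D"
proof -
  have "block A 0 C D = transpose (block (transpose A) (transpose C) 0 (transpose D))"
    by (simp add: transpose_block)
  then show ?thesis by (simp only: det_transpose det_block_upper_triangular)
qed

section \<open>The symplectic group\<close>

definition symplectic_form :: "'a::comm_ring_1^('n::finite+'n)^('n+'n)" where
  "symplectic_form = block 0 (mat 1) (- mat 1) 0"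

lemma symmetric_mat_mult_transpose_iff:
  fixes a b :: "'a::comm_ring_1^'n::finite^'n"
  shows "symmetric_mat (a ** transpose b) \<longleftrightarrow> b ** transpose a = a ** transpose b"
  by (simp add: symmetric_mat_def matrix_transpose_mul)

lemma Sp_block_iff:
  "block a b c d \<in> Sp \<longleftrightarrow> det (block a b c d) = 1 \<and> a ** transpose d - b ** transpose c = mat 1 \<and>
     symmetric_mat (a ** transpose b) \<and> symmetric_mat (c ** transpose d)"
  by (auto simp: Sp_def block_eq_iff)

lemma block_preserves_symplectic_form_iff:
  fixes a b c d :: "'a::comm_ring_1^'n::finite^'n"
  shows "block a b c d ** symplectic_form ** transpose (block a b c d) = symplectic_form \<longleftrightarrow>
    a ** transpose d - b ** transpose c = mat 1 \<and>
    b ** transpose a = a ** transpose b \<and> d ** transpose c = c ** transpose d"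
proof -
  have expand: "block a b c d ** symplectic_form ** transpose (block a b c d) =
    block (a ** transpose b - b ** transpose a) (a ** transpose d - b ** transpose c)
          (c ** transpose b - d ** transpose a) (c ** transpose d - d ** transpose c)"
    by (simp add: symplectic_form_def block_mult transpose_block matrix_neg_left matrix_neg_right)
  have lower_left: "c ** transpose b - d ** transpose a = - transpose (a ** transpose d - b ** transpose c)"
    by (simp add: transpose_diff matrix_transpose_mul)
  show ?thesis
    unfolding expand by (unfold lower_left symplectic_form_def block_eq_iff) (auto simp: transpose_uminus)
qed

lemma Sp_iff_preserves_symplectic_form:
  "M \<in> Sp \<longleftrightarrow> det M = 1 \<and> M ** symplectic_form ** transpose M = symplectic_form"
  by (cases M rule: block_cases)
    (auto simp: Sp_block_iff block_preserves_symplectic_form_iff symmetric_mat_mult_transpose_iff)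

lemma Sp_mult:
  assumes "M \<in> Sp" "N \<in> Sp"
  shows "M ** N \<in> Sp"
proof -
  have "(M ** N) ** symplectic_form ** transpose (M ** N) =
    M ** (N ** symplectic_form ** transpose N) ** transpose M"
    by (simp add: matrix_transpose_mul matrix_mul_assoc)
  then show ?thesis
    using assms by (simp add: Sp_iff_preserves_symplectic_form det_mul)
qed

lemma set_mat_prod_subset_Sp:
  "A \<subseteq> Sp \<Longrightarrow> B \<subseteq> Sp \<Longrightarrow> set_mat_prod A B \<subseteq> Sp"
  by (auto simp: set_mat_prod_def intro: Sp_mult)

lemma U_lower_subset_Sp: "U_lower \<subseteq> Sp"
  by (auto simp: U_lower_def Sp_block_iff det_block_lower_triangular symmetric_mat_def)

lemma U_upper_subset_Sp: "U_upper \<subseteq> Sp"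
  by (auto simp: U_upper_def Sp_block_iff det_block_upper_triangular symmetric_mat_def)

lemma H_diag_subset_Sp: "H_diag \<subseteq> Sp"
  by (auto simp: H_diag_def Sp_block_iff det_block_upper_triangular matrix_inv_left
      symmetric_mat_def simp flip: det_mul)

lemma Sp_block_inverse:
  assumes "block a b c d \<in> Sp"
  shows "block (transpose d) (- transpose b) (- transpose c) (transpose a) ** block a b c d = mat 1"
proof -
  from assms have rels: "a ** transpose d - b ** transpose c = mat 1"
    "b ** transpose a = a ** transpose b" "d ** transpose c = c ** transpose d"
    by (simp_all add: Sp_block_iff symmetric_mat_mult_transpose_iff)
  moreover have "d ** transpose a - c ** transpose b = mat 1"
    using arg_cong[OF rels(1), of transpose] by (simp add: transpose_diff matrix_transpose_mul)
  ultimately have "block a b c d ** block (transpose d) (- transpose b) (- transpose c) (transpose a)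
      = mat 1"
    unfolding block_mult mat_1_block block_eq_iff by (simp add: matrix_neg_right algebra_simps)
  then show ?thesis by (simp add: matrix_left_right_inverse)
qed

lemma Sp_block_transpose_relations:
  assumes "block a b c d \<in> Sp"
  shows "transpose b ** d = transpose d ** b" "transpose a ** d - transpose c ** b = mat 1"
  using Sp_block_inverse[OF assms]
  by (simp_all add: block_mult mat_1_block block_eq_iff matrix_neg_left algebra_simps)

lemma Sp_block_kernels_disjoint:
  assumes "block a b c d \<in> Sp" "b *v w = 0" "d *v w = 0"
  shows "w = 0"
proof -
  have "w = (transpose a ** d - transpose c ** b) *v w"
    using Sp_block_transpose_relations(2)[OF assms(1)] by simp
  also have "\<dots> = 0"
    using assms(2,3) by (simp add: matrix_vector_mult_diff_rdistrib flip: matrix_vector_mul_assoc)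
  finally show ?thesis .
qed

section \<open>Making the lower right block invertible\<close>

lemma sum_mult_matrix_vector:
  fixes A :: "'a::comm_ring_1^'n::finite^'m::finite"
  shows "(\<Sum>k\<in>UNIV. (A *v u) $ k * v $ k) = (\<Sum>k\<in>UNIV. u $ k * (transpose A *v v) $ k)"
  by (simp add: matrix_vector_mult_def transpose_def sum_distrib_left sum_distrib_right mult_ac)
    (rule sum.swap)

lemma kernel_subspace: "vec.subspace {w. (A::'a::field^'n::finite^'m::finite) *v w = 0}"
  by (auto simp: vec.subspace_def matrix_vector_right_distrib vec.scale)

lemma ex_symmetric_kernel_shrinking:
  fixes b d :: "'a::field^'n::finite^'n"
  assumes iso: "transpose b ** d = transpose d ** b"
    and w0: "d *v w0 = 0" "b *v w0 \<noteq> 0"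
  shows "\<exists>s. symmetric_mat s \<and> {w. (d - s ** b) *v w = 0} \<subset> {w. d *v w = 0}"
proof -
  obtain i where i: "(b *v w0) $ i \<noteq> 0" using w0(2) by (auto simp: vec_eq_iff)
  define s :: "'a^'n^'n" where "s = (\<chi> p q. if p = i \<and> q = i then 1 else 0)"
  have s_sym: "symmetric_mat s" by (auto simp: symmetric_mat_def s_def transpose_def vec_eq_iff)
  have s_apply: "(s *v v) $ p = (if p = i then v $ i else 0)" for v p
    by (simp add: s_def matrix_vector_mult_def if_distrib if_distribR cong: if_cong)
  have d_split: "d *v w = (d - s ** b) *v w + s *v (b *v w)" for w
    by (simp add: matrix_vector_mult_diff_rdistrib matrix_vector_mul_assoc)
  have "{w. (d - s ** b) *v w = 0} \<subseteq> {w. d *v w = 0}"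
  proof
    fix w assume "w \<in> {w. (d - s ** b) *v w = 0}"
    then have dw: "d *v w = s *v (b *v w)" using d_split[of w] by simp
    have "(\<Sum>k\<in>UNIV. (b *v w0) $ k * (d *v w) $ k) = (\<Sum>k\<in>UNIV. (d *v w0) $ k * (b *v w) $ k)"
      by (simp add: sum_mult_matrix_vector matrix_vector_mul_assoc iso)
    then have "(b *v w0) $ i * (b *v w) $ i = 0"
      by (simp add: w0(1) dw s_apply if_distrib cong: if_cong)
    then have "s *v (b *v w) = 0" using i by (simp add: vec_eq_iff s_apply)
    with dw show "w \<in> {w. d *v w = 0}" by simp
  qed
  moreover have "(d - s ** b) *v w0 = - (s *v (b *v w0))"
    using d_split[of w0] w0(1) by (simp add: eq_neg_iff_add_eq_0)
  then have "((d - s ** b) *v w0) $ i \<noteq> 0" using i by (simp add: s_apply)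
  then have "w0 \<notin> {w. (d - s ** b) *v w = 0}" by auto
  ultimately show ?thesis using s_sym w0(1) by blast
qed

lemma ex_symmetric_invertible_diff_mult:
  fixes b d :: "'a::field^'n::finite^'n"
  assumes "transpose b ** d = transpose d ** b"
    and "\<And>w. b *v w = 0 \<Longrightarrow> d *v w = 0 \<Longrightarrow> w = 0"
  shows "\<exists>x. symmetric_mat x \<and> invertible (d - x ** b)"
  using assms
proof (induction "vec.dim {w. d *v w = 0}" arbitrary: d rule: less_induct)
  case less
  show ?case
  proof (cases "\<forall>w. d *v w = 0 \<longrightarrow> w = 0")
    case True
    then have "invertible d"
      by (simp add: invertible_left_inverse matrix_left_invertible_ker)
    then show ?thesis by (intro exI[of _ 0]) (simp add: symmetric_mat_def)
  next
    case False
    then obtain w0 where w0: "d *v w0 = 0" "w0 \<noteq> 0" by blast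
    then have "b *v w0 \<noteq> 0" using less.prems(2) by blast
    then obtain s where s: "symmetric_mat s"
      and shrink: "{w. (d - s ** b) *v w = 0} \<subset> {w. d *v w = 0}"
      using ex_symmetric_kernel_shrinking less.prems(1) w0(1) by blast
    have "vec.dim {w. (d - s ** b) *v w = 0} < vec.dim {w. d *v w = 0}"
      by (rule vec.dim_psubset)
        (use shrink in \<open>simp add: vec.span_eq_iff[THEN iffD2, OF kernel_subspace]\<close>)
    moreover have "transpose b ** (d - s ** b) = transpose (d - s ** b) ** b"
      using less.prems(1) s
      by (simp add: symmetric_mat_def matrix_diff_ldistrib matrix_diff_rdistrib transpose_diff
          matrix_transpose_mul matrix_mul_assoc)
    moreover have "w = 0" if "b *v w = 0" "(d - s ** b) *v w = 0" for w
    proof (rule less.prems(2))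
      show "d *v w = 0" using that by (simp add: matrix_vector_mult_diff_rdistrib
          flip: matrix_vector_mul_assoc)
    qed (fact that(1))
    ultimately have "\<exists>x. symmetric_mat x \<and> invertible (d - s ** b - x ** b)"
      by (rule less.hyps)
    then obtain x where x: "symmetric_mat x" "invertible (d - s ** b - x ** b)" by blast
    have "symmetric_mat (x + s)" using x(1) s by (simp add: symmetric_mat_def transpose_add)
    moreover have "d - (x + s) ** b = d - s ** b - x ** b"
      by (simp add: matrix_add_rdistrib diff_diff_eq add.commute)
    ultimately show ?thesis using x(2) by metis
  qed
qed

section \<open>The factorisation\<close>

lemma set_mat_prod_assoc:
  "set_mat_prod (set_mat_prod A B) C = set_mat_prod A (set_mat_prod B C)"
  unfolding set_mat_prod_def by (auto simp: matrix_mul_assoc) (metis matrix_mul_assoc)+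

lemma Sp_invertible_corner_factorization:
  fixes a b c d :: "'a::field^'n::finite^'n"
  assumes Sp: "block a b c d \<in> Sp" and d: "invertible d"
  shows "block a b c d \<in> set_mat_prod U_upper (set_mat_prod U_lower H_diag)"
proof -
  from Sp have ad_minus_bc: "a ** transpose d - b ** transpose c = mat 1"
    and cd_sym: "symmetric_mat (c ** transpose d)"
    by (simp_all add: Sp_block_iff)
  have cd_comm: "c ** transpose d = d ** transpose c"
    using cd_sym by (simp add: symmetric_mat_mult_transpose_iff)
  have bd_sym: "transpose b ** d = transpose d ** b"
    using Sp_block_transpose_relations(1)[OF Sp] .
  define di where "di = matrix_inv d"
  have d_di: "d ** di = mat 1" "di ** d = mat 1"
    using d by (simp_all add: di_def matrix_inv_right matrix_inv_left)
  then have dT_diT: "transpose d ** transpose di = mat 1" "transpose di ** transpose d = mat 1"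
    by (simp_all flip: matrix_transpose_mul)
  define y where "y = b ** di"
  define z where "z = c ** transpose d"
  have "transpose y = transpose di ** transpose b ** (d ** di)"
    by (simp add: y_def d_di matrix_transpose_mul)
  also have "\<dots> = transpose di ** (transpose b ** d) ** di"
    by (simp add: matrix_mul_assoc)
  also have "\<dots> = y"
    by (simp add: bd_sym y_def matrix_mul_assoc dT_diT)
  finally have y_sym: "symmetric_mat y" by (simp add: symmetric_mat_def)
  have "di ** c = di ** (c ** transpose d) ** transpose di"
    by (simp flip: matrix_mul_assoc add: dT_diT)
  also have "\<dots> = transpose c ** transpose di"
    by (simp add: cd_comm matrix_mul_assoc d_di)
  finally have c_conj: "di ** c = transpose c ** transpose di" .
  have ad_eq: "a ** transpose d = mat 1 + b ** transpose c"
    using ad_minus_bc by (simp add: diff_eq_eq add.commute)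
  have "a = a ** transpose d ** transpose di"
    by (simp flip: matrix_mul_assoc add: dT_diT)
  also have "\<dots> = transpose di + b ** transpose c ** transpose di"
    by (simp add: ad_eq matrix_add_rdistrib)
  also have "\<dots> = transpose di + b ** (di ** c) ** (transpose d ** transpose di)"
    by (simp add: c_conj dT_diT matrix_mul_assoc)
  also have "\<dots> = transpose di + y ** z ** transpose di"
    by (simp add: y_def z_def matrix_mul_assoc)
  finally have a_eq: "a = transpose di + y ** z ** transpose di" .
  have "block a b c d =
    block (mat 1) y 0 (mat 1) ** (block (mat 1) 0 z (mat 1) ** block (transpose di) 0 0 d)"
    by (simp add: block_mult a_eq y_def z_def matrix_add_rdistrib flip: matrix_mul_assoc)
      (simp add: matrix_mul_assoc d_di dT_diT)
  moreover have "block (mat 1) y 0 (mat 1) \<in> U_upper"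
    using y_sym by (auto simp: U_upper_def)
  moreover have "block (mat 1) 0 z (mat 1) \<in> U_lower"
    using cd_sym by (auto simp: U_lower_def z_def)
  moreover have "block (transpose di) 0 0 d \<in> H_diag"
  proof -
    have "invertible (transpose d)" "matrix_inv (transpose d) = transpose di"
      using d dT_diT by (simp_all add: invertible_transpose matrix_inv_unique)
    then show ?thesis unfolding H_diag_def by (intro CollectI exI[of _ "transpose d"]) simp
  qed
  ultimately show ?thesis unfolding set_mat_prod_def by blast
qed

lemma Sp_lower_upper_lower_diag_factorization:
  fixes M :: "'a::field^('n::finite+'n)^('n+'n)"
  assumes "M \<in> Sp"
  shows "M \<in> set_mat_prod U_lower (set_mat_prod U_upper (set_mat_prod U_lower H_diag))"
proof -
  obtain a b c d where M: "M = block a b c d" by (rule block_cases)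
  obtain x where x: "symmetric_mat x" "invertible (d - x ** b)"
    using ex_symmetric_invertible_diff_mult Sp_block_transpose_relations(1)
      Sp_block_kernels_disjoint assms unfolding M by metis
  let ?L = "\<lambda>k. block (mat 1) 0 k (mat 1) :: 'a^('n+'n)^('n+'n)"
  have L_in: "?L k \<in> U_lower" if "symmetric_mat k" for k
    using that by (auto simp: U_lower_def)
  have "?L (- x) ** M \<in> Sp"
    using x(1) assms by (intro Sp_mult L_in[THEN subsetD[OF U_lower_subset_Sp]])
      (simp_all add: symmetric_mat_def transpose_uminus)
  moreover have "?L (- x) ** M = block a b (c - x ** a) (d - x ** b)"
    by (simp add: M block_mult matrix_neg_left)
  ultimately have "?L (- x) ** M \<in> set_mat_prod U_upper (set_mat_prod U_lower H_diag)"
    using Sp_invertible_corner_factorization x(2) by metis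
  moreover have "M = ?L x ** (?L (- x) ** M)"
    by (simp add: matrix_mul_assoc block_mult matrix_neg_right flip: mat_1_block)
  ultimately show ?thesis
    using L_in[OF x(1)] unfolding set_mat_prod_def by blast
qed

theorem lemma4p1:
  shows "(Sp :: (('a::field)^('n::finite+'n)^('n+'n)) set) =
    set_mat_prod (set_mat_prod (set_mat_prod U_lower U_upper) U_lower) H_diag"
proof
  show "Sp \<subseteq> set_mat_prod (set_mat_prod (set_mat_prod U_lower U_upper) U_lower) H_diag"
    using Sp_lower_upper_lower_diag_factorization by (auto simp: set_mat_prod_assoc)
  show "set_mat_prod (set_mat_prod (set_mat_prod U_lower U_upper) U_lower) H_diag \<subseteq> Sp"
    by (intro set_mat_prod_subset_Sp U_lower_subset_Sp U_upper_subset_Sp H_diag_subset_Sp)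
qed

end
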